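(* Applied to the Double Coverage algorithm on the line, the transformation described below, using upon each request $r_i$ the $r_i$-canonical matching, produces a lazy, local and monotone $k$-server algorithm.
   Context: $k$-server on the real line with $d(x,y)=|x-y|$: $k$ servers at initial points; requests arrive online and must be served by moving a server to the request; cost is total distance moved. Double Coverage (DC): on request $r$, let $s_L,s_R$ be the servers immediately to the left and right of $r$ (if one does not exist, ignore it); move both toward $r$ by $\min\{d(s_L,r),d(s_R,r)\}$; serve $r$ with the server that reached it. A server $s$ in configuration $S$ is adjacent to a point $v$ if no other server of $S$ lies on the segment between $v$ and $s$. An algorithm is lazy if on each request it moves only one server, to the request; local if it always serves a request with an adjacent server; monotone if whenever it would serve a request at $r$ with server $s$, it would also serve a request at any point between $r$ and $s$ with $s$. For sorted sets $X=\{x_1\le\dots\le x_k\}$, $Y=\{y_1\le\dots\le y_k\}$, the canonical matching matches $x_i$ with $y_i$. For $r\in X$, the $r$-canonical matching is obtained from the canonical matching as follows: if $r$ is matched to $y$ and other points of $Y$ lie between $r$ and $y$, let $y'$ be the one closest to $r$, with $y'$ matched to $x$; rematch $r$ with $y'$ and $x$ with $y$. Transformation: $A'$ starts in the same configuration as DC; upon request $r_i$, let $S_{DC}$ be DC's configuration after serving $r_i$ and $S_{A'}$ the configuration of $A'$ just before; compute the $r_i$-canonical matching of $S_{DC}$ to $S_{A'}$ and serve $r_i$ with the server of $A'$ matched to $r_i$. *)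

theory Defs
  imports Complex_Main "HOL-Library.Multiset"
begin

(* Configurations of k servers on the real line are multisets of reals
   (several servers may share a point); the number of servers is the size. *)

definition between :: "real \<Rightarrow> real \<Rightarrow> real \<Rightarrow> bool" where
  "between a b x \<longleftrightarrow> min a b \<le> x \<and> x \<le> max a b"

definition adjacent :: "real multiset \<Rightarrow> real \<Rightarrow> real \<Rightarrow> bool" where
  "adjacent S v s \<longleftrightarrow> s \<in># S \<and> (\<forall>x\<in>#S. between v s x \<longrightarrow> x = s)"

definition dc_step :: "real multiset \<Rightarrow> real \<Rightarrow> real multiset" where
  "dc_step C r =
    (let L = filter_mset (\<lambda>x. x < r) C; R = filter_mset (\<lambda>x. r < x) C in
     if r \<in># C then C
     else if L = {#} then add_mset r (C - {#Min_mset R#})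
     else if R = {#} then add_mset r (C - {#Max_mset L#})
     else (let sL = Max_mset L; sR = Min_mset R; d = min (r - sL) (sR - r)
           in {#sL + d, sR - d#} + (C - {#sL, sR#})))"

definition canonical_matching :: "real multiset \<Rightarrow> real multiset \<Rightarrow> (real \<times> real) list" where
  "canonical_matching X Y = zip (sorted_list_of_multiset X) (sorted_list_of_multiset Y)"

definition req_index :: "real multiset \<Rightarrow> real \<Rightarrow> nat" where
  "req_index X r = (LEAST i. i < size X \<and> sorted_list_of_multiset X ! i = r)"

(* r-canonical matching of X to Y (as a list of pairs, entry i being the pair of
   the i-th smallest point of X) *)
definition r_canonical_matching :: "real multiset \<Rightarrow> real multiset \<Rightarrow> real \<Rightarrow> (real \<times> real) list" where
  "r_canonical_matching X Y r =
    (let xs = sorted_list_of_multiset X; ys = sorted_list_of_multiset Y;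
         i = req_index X r; y = ys ! i;
         J = {j. j < length ys \<and> j \<noteq> i \<and> between r y (ys ! j)} in
     if J = {} then zip xs ys
     else (let j = (ARG_MIN (\<lambda>j. \<bar>ys ! j - r\<bar>) j. j \<in> J)
           in zip xs (ys[i := ys ! j, j := y])))"

definition matched_server :: "real multiset \<Rightarrow> real multiset \<Rightarrow> real \<Rightarrow> real" where
  "matched_server X Y r = snd (r_canonical_matching X Y r ! req_index X r)"

(* The transformation applied to a base algorithm with step function base_step
   (here: DC). State = (configuration of the base algorithm, configuration of A'). *)
definition transf_step :: "(real multiset \<Rightarrow> real \<Rightarrow> real multiset)
     \<Rightarrow> real multiset \<times> real multiset \<Rightarrow> real \<Rightarrow> real multiset \<times> real multiset" where
  "transf_step base_step st r =
    (let D' = base_step (fst st) r; A = snd st; s = matched_server D' A r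
     in (D', add_mset r (A - {#s#})))"

(* Generic deterministic online k-server algorithm: states 'st, configuration map conf,
   transition step, initial state st0. *)
definition reachable :: "('st \<Rightarrow> real \<Rightarrow> 'st) \<Rightarrow> 'st \<Rightarrow> 'st \<Rightarrow> bool" where
  "reachable step st0 st \<longleftrightarrow> (\<exists>rs. st = fold (\<lambda>r s. step s r) rs st0)"

definition serves_with :: "('st \<Rightarrow> real multiset) \<Rightarrow> ('st \<Rightarrow> real \<Rightarrow> 'st) \<Rightarrow> 'st \<Rightarrow> real \<Rightarrow> real \<Rightarrow> bool" where
  "serves_with conf step st r s \<longleftrightarrow>
     s \<in># conf st \<and> conf (step st r) = add_mset r (conf st - {#s#})"

definition lazy_alg :: "('st \<Rightarrow> real multiset) \<Rightarrow> ('st \<Rightarrow> real \<Rightarrow> 'st) \<Rightarrow> 'st \<Rightarrow> bool" where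
  "lazy_alg conf step st0 \<longleftrightarrow>
     (\<forall>st r. reachable step st0 st \<longrightarrow> (\<exists>s. serves_with conf step st r s))"

definition local_alg :: "('st \<Rightarrow> real multiset) \<Rightarrow> ('st \<Rightarrow> real \<Rightarrow> 'st) \<Rightarrow> 'st \<Rightarrow> bool" where
  "local_alg conf step st0 \<longleftrightarrow>
     (\<forall>st r s. reachable step st0 st \<longrightarrow> serves_with conf step st r s \<longrightarrow> adjacent (conf st) r s)"

definition monotone_alg :: "('st \<Rightarrow> real multiset) \<Rightarrow> ('st \<Rightarrow> real \<Rightarrow> 'st) \<Rightarrow> 'st \<Rightarrow> bool" where
  "monotone_alg conf step st0 \<longleftrightarrow>
     (\<forall>st r s r'. reachable step st0 st \<longrightarrow> serves_with conf step st r s \<longrightarrow>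
        between r s r' \<longrightarrow> serves_with conf step st r' s)"

end

theory Submission
  imports Defs
begin

text \<open>
  The server of A' matched to r by the r-canonical matching is the server of A' closest to r on
  the segment from r to its canonical partner y, the server of A' whose rank equals the rank of r
  in DC's new configuration. Such a server is adjacent to r, and A' moves only it, so A' is lazy and
  local. The rank of r after DC serves it is monotone in r: it is the number of DC servers left
  of r, minus one if the left neighbour is no farther than the right one. Hence y is monotone in
  r, and a request r' between r and s still sees s as the closest server on the segment from r'
  to its own partner, which gives monotonicity.
\<close>

definition closest_on_segment :: "real multiset \<Rightarrow> real \<Rightarrow> real \<Rightarrow> real \<Rightarrow> bool" where
  "closest_on_segment Y r y s \<longleftrightarrow>
     s \<in># Y \<and> between r y s \<and> (\<forall>x\<in>#Y. between r s x \<longrightarrow> x = s)"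

lemma closest_on_segment_unique:
  "closest_on_segment Y r y s \<Longrightarrow> closest_on_segment Y r y s' \<Longrightarrow> s = s'"
  unfolding closest_on_segment_def between_def by (smt (verit))

lemma closest_on_segment_adjacent: "closest_on_segment Y r y s \<Longrightarrow> adjacent Y r s"
  by (simp add: closest_on_segment_def adjacent_def)

lemma closest_on_segment_shift:
  assumes closest: "closest_on_segment Y r y s" and "between r s r'"
    and "r \<le> r' \<Longrightarrow> y \<le> y'" and "r' \<le> r \<Longrightarrow> y' \<le> y"
  shows "closest_on_segment Y r' y' s"
  unfolding closest_on_segment_def
proof (intro conjI ballI impI)
  show "s \<in># Y" using closest by (simp add: closest_on_segment_def)
  show "between r' y' s"
    using assms unfolding closest_on_segment_def between_def by (smt (verit))
  fix x assume "x \<in># Y" "between r' s x"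
  then have "between r s x" using \<open>between r s r'\<close> unfolding between_def by linarith
  then show "x = s" using closest \<open>x \<in># Y\<close> by (simp add: closest_on_segment_def)
qed

lemma closest_on_segment_arg_min:
  fixes ys :: "real list" and r :: real
  assumes "i < length ys"
  defines "J \<equiv> {j. j < length ys \<and> j \<noteq> i \<and> between r (ys ! i) (ys ! j)}"
  shows "closest_on_segment (mset ys) r (ys ! i)
           (if J = {} then ys ! i else ys ! (ARG_MIN (\<lambda>j. \<bar>ys ! j - r\<bar>) j. j \<in> J))"
proof (cases "J = {}")
  case True
  have "x = ys ! i" if "x \<in> set ys" "between r (ys ! i) x" for x
    using that True unfolding J_def by (auto simp: in_set_conv_nth)
  with assms(1) True show ?thesis
    by (simp add: closest_on_segment_def between_def)
next
  case False
  define j where "j = (ARG_MIN (\<lambda>j. \<bar>ys ! j - r\<bar>) j. j \<in> J)"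
  have "finite J" by (simp add: J_def)
  then have jJ: "j \<in> J" and jmin: "\<And>m. m \<in> J \<Longrightarrow> \<bar>ys ! j - r\<bar> \<le> \<bar>ys ! m - r\<bar>"
    using arg_min_if_finite(1)[of J] arg_min_least[of J] False unfolding j_def arg_min_on_def
    by simp_all
  have "x = ys ! j" if "m < length ys" "x = ys ! m" "between r (ys ! j) x" for m x
  proof (cases "m = i")
    case True
    with that jJ show ?thesis unfolding J_def between_def by (smt (verit) mem_Collect_eq)
  next
    case False
    with that jJ have "m \<in> J" unfolding J_def between_def by (smt (verit) mem_Collect_eq)
    from jmin[OF this] that show ?thesis unfolding between_def by (smt (verit))
  qed
  moreover have "j < length ys" "between r (ys ! i) (ys ! j)"
    using jJ by (simp_all add: J_def)
  ultimately show ?thesis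
    using False by (auto simp: closest_on_segment_def j_def[symmetric] in_set_conv_nth)
qed

lemma sorted_nth_length_filter_less:
  fixes xs :: "real list"
  assumes "sorted xs" "r \<in> set xs"
  defines "c \<equiv> length (filter (\<lambda>x. x < r) xs)"
  shows "c < length xs \<and> xs ! c = r \<and> (\<forall>i<c. xs ! i < r)"
  using assms(1,2) unfolding c_def
proof (induction xs)
  case (Cons a xs)
  show ?case
  proof (cases "a < r")
    case True
    with Cons show ?thesis by (auto simp: nth_Cons' less_Suc_eq_0_disj)
  next
    case False
    with Cons.prems have "a = r" "filter (\<lambda>x. x < r) xs = []"
      by (auto simp: filter_empty_conv)
    then show ?thesis using False by simp
  qed
qed simp

lemma req_index_eq_size_below:
  assumes "r \<in># X"
  shows "req_index X r = size {#x \<in># X. x < r#}"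
proof -
  define xs where "xs = sorted_list_of_multiset X"
  have X: "mset xs = X" unfolding xs_def by simp
  define c where "c = length (filter (\<lambda>x. x < r) xs)"
  have c: "c < length xs" "xs ! c = r" "\<forall>i<c. xs ! i < r"
    using sorted_nth_length_filter_less[of xs r] assms X unfolding c_def xs_def
    by (auto simp flip: set_mset_mset)
  have "req_index X r = c"
    unfolding req_index_def xs_def[symmetric]
    by (rule Least_equality) (use c X in \<open>auto simp flip: size_mset intro: leI\<close>)
  then show ?thesis unfolding c_def by (metis X mset_filter size_mset)
qed

lemma req_index_less_size:
  assumes "r \<in># X"
  shows "req_index X r < size X"
proof -
  let ?xs = "sorted_list_of_multiset X"
  have "length (filter (\<lambda>x. x < r) ?xs) < length ?xs"
    using sorted_nth_length_filter_less[of ?xs r] assms by simp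
  then show ?thesis
    using assms by (metis req_index_eq_size_below mset_filter mset_sorted_list_of_multiset size_mset)
qed

definition canonical_partner :: "real multiset \<Rightarrow> real multiset \<Rightarrow> real \<Rightarrow> real" where
  "canonical_partner X Y r = sorted_list_of_multiset Y ! req_index X r"

lemma matched_server_closest:
  assumes "r \<in># X" "size X = size Y"
  shows "closest_on_segment Y r (canonical_partner X Y r) (matched_server X Y r)"
proof -
  define xs where "xs = sorted_list_of_multiset X"
  define ys where "ys = sorted_list_of_multiset Y"
  define i where "i = req_index X r"
  define J where "J = {j. j < length ys \<and> j \<noteq> i \<and> between r (ys ! i) (ys ! j)}"
  have lengths: "length xs = size X" "length ys = size Y"
    unfolding xs_def ys_def by (metis mset_sorted_list_of_multiset size_mset)+
  have i: "i < length ys"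
    using req_index_less_size[OF assms(1)] assms(2) lengths unfolding i_def by simp
  define j where "j = (ARG_MIN (\<lambda>j. \<bar>ys ! j - r\<bar>) j. j \<in> J)"
  have "r_canonical_matching X Y r
      = (if J = {} then zip xs ys else zip xs (ys[i := ys ! j, j := ys ! i]))"
    unfolding r_canonical_matching_def Let_def xs_def ys_def i_def J_def j_def ..
  moreover have "j < length ys \<and> j \<noteq> i" if "J \<noteq> {}"
  proof -
    have "j \<in> J"
      using arg_min_if_finite(1)[of J] that unfolding j_def arg_min_on_def by (simp add: J_def)
    then show ?thesis by (simp add: J_def)
  qed
  ultimately have "matched_server X Y r = (if J = {} then ys ! i else ys ! j)"
    using i lengths assms(2) unfolding matched_server_def i_def[symmetric] by auto
  with closest_on_segment_arg_min[OF i, of r] show ?thesis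
    unfolding J_def j_def ys_def i_def canonical_partner_def by simp
qed

text \<open>
  On a tie both neighbours reach r; as in the strict case the left one no longer lies left of r,
  hence the non-strict comparison.
\<close>
definition dc_left_neighbour_reaches :: "real multiset \<Rightarrow> real \<Rightarrow> bool" where
  "dc_left_neighbour_reaches D r \<longleftrightarrow>
     r \<notin># D \<and> {#x \<in># D. x < r#} \<noteq> {#} \<and>
     ({#x \<in># D. r < x#} = {#} \<or>
      r - Max_mset {#x \<in># D. x < r#} \<le> Min_mset {#x \<in># D. r < x#} - r)"

lemma dc_request_cases:
  obtains (present) "r \<in># D"
    | (no_left) "r \<notin># D" "{#x \<in># D. x < r#} = {#}"
    | (no_right) "r \<notin># D" "{#x \<in># D. x < r#} \<noteq> {#}" "{#x \<in># D. r < x#} = {#}"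
    | (interior) "r \<notin># D" "{#x \<in># D. x < r#} \<noteq> {#}" "{#x \<in># D. r < x#} \<noteq> {#}"
  by blast

lemma dc_step_no_left:
  assumes "r \<notin># D" "{#x \<in># D. x < r#} = {#}"
  shows "dc_step D r = add_mset r (D - {#Min_mset {#x \<in># D. r < x#}#})"
  unfolding dc_step_def Let_def using assms by (simp only: if_False if_True simp_thms)

lemma dc_step_no_right:
  assumes "r \<notin># D" "{#x \<in># D. x < r#} \<noteq> {#}" "{#x \<in># D. r < x#} = {#}"
  shows "dc_step D r = add_mset r (D - {#Max_mset {#x \<in># D. x < r#}#})"
  unfolding dc_step_def Let_def using assms by (simp only: if_False if_True simp_thms)

lemma dc_step_interior:
  assumes "r \<notin># D" "{#x \<in># D. x < r#} \<noteq> {#}" "{#x \<in># D. r < x#} \<noteq> {#}"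
    and "a = Max_mset {#x \<in># D. x < r#}" "b = Min_mset {#x \<in># D. r < x#}"
  shows "dc_step D r = {#a + min (r - a) (b - r), b - min (r - a) (b - r)#} + (D - {#a, b#})"
  unfolding dc_step_def Let_def using assms by (simp only: if_False simp_thms)

lemma Max_mset_filter_in:
  "{#x \<in># D. P x#} \<noteq> {#} \<Longrightarrow> Max_mset {#x \<in># D. P x#} \<in># D \<and> P (Max_mset {#x \<in># D. P x#})"
  and Min_mset_filter_in:
  "{#x \<in># D. P x#} \<noteq> {#} \<Longrightarrow> Min_mset {#x \<in># D. P x#} \<in># D \<and> P (Min_mset {#x \<in># D. P x#})"
  for D :: "'a::linorder multiset"
  by (metis Max_in Min_in finite_set_mset set_mset_eq_empty_iff set_mset_filter mem_Collect_eq)+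

lemma dc_step_contains_request: "r \<in># dc_step D r"
  by (auto simp: dc_step_def Let_def min_def)

lemma size_dc_step:
  assumes "D \<noteq> {#}"
  shows "size (dc_step D r) = size D"
proof -
  have "size D > 0" using assms by (simp add: nonempty_has_size)
  show ?thesis
  proof (cases rule: dc_request_cases[of r D])
    case present
    then show ?thesis by (simp add: dc_step_def)
  next
    case no_left
    with assms have "{#x \<in># D. r < x#} \<noteq> {#}"
      by (metis filter_mset_eq_mempty_iff linorder_neqE_linordered_idom multiset_nonemptyE)
    with no_left \<open>size D > 0\<close> show ?thesis
      using Min_mset_filter_in[of "\<lambda>x. r < x" D] by (simp add: dc_step_no_left size_Diff_singleton)
  next
    case no_right
    with \<open>size D > 0\<close> show ?thesis
      using Max_mset_filter_in[OF no_right(2)] by (simp add: dc_step_no_right size_Diff_singleton)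
  next
    case interior
    define a where "a = Max_mset {#x \<in># D. x < r#}"
    define b where "b = Min_mset {#x \<in># D. r < x#}"
    have "a \<in># D" "a < r" "b \<in># D" "r < b"
      using Max_mset_filter_in[OF interior(2)] Min_mset_filter_in[OF interior(3)]
      unfolding a_def b_def by simp_all
    then have "{#a, b#} \<subseteq># D"
      by (simp add: insert_subset_eq_iff in_diff_count)
    then show ?thesis
      using dc_step_interior[OF interior a_def b_def] size_mset_mono[of "{#a, b#}" D]
      by (simp add: size_Diff_submset)
  qed
qed

lemma size_below_dc_step:
  "size {#x \<in># dc_step D r. x < r#} =
     (if dc_left_neighbour_reaches D r then size {#x \<in># D. x < r#} - 1
      else size {#x \<in># D. x < r#})"
proof (cases rule: dc_request_cases[of r D])
  case present
  then show ?thesis by (simp add: dc_step_def dc_left_neighbour_reaches_def)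
next
  case no_left
  then show ?thesis
    by (simp add: dc_step_no_left dc_left_neighbour_reaches_def filter_diff_mset
        del: filter_mset_eq_mempty_iff)
next
  case no_right
  define a where "a = Max_mset {#x \<in># D. x < r#}"
  have a: "a \<in># {#x \<in># D. x < r#}"
    using Max_mset_filter_in[OF no_right(2)] unfolding a_def by simp
  then have "{#x \<in># dc_step D r. x < r#} = {#x \<in># D. x < r#} - {#a#}"
    unfolding dc_step_no_right[OF no_right] a_def[symmetric] by (simp add: filter_diff_mset)
  moreover have "dc_left_neighbour_reaches D r"
    using no_right unfolding dc_left_neighbour_reaches_def by blast
  ultimately show ?thesis
    using a by (simp add: size_Diff_singleton)
next
  case interior
  define a where "a = Max_mset {#x \<in># D. x < r#}"
  define b where "b = Min_mset {#x \<in># D. r < x#}"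
  define d where "d = min (r - a) (b - r)"
  have a: "a \<in># {#x \<in># D. x < r#}" and b: "b \<in># {#x \<in># D. r < x#}"
    using Max_mset_filter_in[OF interior(2)] Min_mset_filter_in[OF interior(3)]
    unfolding a_def b_def by simp_all
  have "{#x \<in># dc_step D r. x < r#}
      = (if a + d < r then {#a + d#} else {#}) + ({#x \<in># D. x < r#} - {#a#})"
    using a b unfolding dc_step_interior[OF interior a_def b_def] d_def[symmetric]
    by (auto simp: filter_diff_mset d_def min_def)
  moreover have "a + d < r \<longleftrightarrow> \<not> dc_left_neighbour_reaches D r"
    using interior unfolding dc_left_neighbour_reaches_def a_def[symmetric] b_def[symmetric] d_def
    by (auto simp: min_def simp del: filter_mset_eq_mempty_iff)
  ultimately show ?thesis
    using a by (auto simp: size_Diff_singleton)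
qed

lemma dc_left_neighbour_reaches_shift_left:
  assumes "r \<le> r'" and same_left: "{#x \<in># D. x < r'#} = {#x \<in># D. x < r#}"
    and reaches: "dc_left_neighbour_reaches D r'"
  shows "dc_left_neighbour_reaches D r"
proof -
  have "r' \<notin># D" using reaches by (simp add: dc_left_neighbour_reaches_def)
  have beyond: "r' < x" if "x \<in># D" "r \<le> x" for x
  proof (rule ccontr)
    assume "\<not> r' < x"
    moreover have "x \<noteq> r'" using \<open>r' \<notin># D\<close> that(1) by blast
    ultimately have "x \<in># {#x \<in># D. x < r'#}" using that(1) by simp
    with same_left that show False by simp
  qed
  then have "r \<notin># D" using \<open>r \<le> r'\<close> by fastforce
  moreover have "{#x \<in># D. r < x#} = {#x \<in># D. r' < x#}"
    using beyond \<open>r \<le> r'\<close> by (auto intro: filter_mset_cong)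
  ultimately show ?thesis
    using reaches same_left \<open>r \<le> r'\<close>
    unfolding dc_left_neighbour_reaches_def by (smt (verit))
qed

lemma size_below_dc_step_mono:
  assumes "r \<le> r'"
  shows "size {#x \<in># dc_step D r. x < r#} \<le> size {#x \<in># dc_step D r'. x < r'#}"
proof (cases "{#x \<in># D. x < r'#} = {#x \<in># D. x < r#}")
  case True
  then show ?thesis
    using dc_left_neighbour_reaches_shift_left[OF assms True]
    by (simp add: size_below_dc_step)
next
  case False
  have "{#x \<in># D. x < r#} \<subseteq># {#x \<in># D. x < r'#}"
    using assms by (intro mset_subset_eqI) auto
  with False have "size {#x \<in># D. x < r#} < size {#x \<in># D. x < r'#}"
    by (simp add: mset_subset_size subset_mset.less_le)
  then show ?thesis by (auto simp: size_below_dc_step)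
qed

lemma canonical_partner_dc_step_mono:
  assumes "D \<noteq> {#}" "size D = size A" "r \<le> r'"
  shows "canonical_partner (dc_step D r) A r \<le> canonical_partner (dc_step D r') A r'"
proof -
  have "req_index (dc_step D r) r \<le> req_index (dc_step D r') r'"
    using size_below_dc_step_mono[OF assms(3)]
    by (simp add: req_index_eq_size_below dc_step_contains_request)
  moreover have "req_index (dc_step D r') r' < length (sorted_list_of_multiset A)"
    using req_index_less_size[OF dc_step_contains_request] assms(1,2)
    by (metis mset_sorted_list_of_multiset size_dc_step size_mset)
  ultimately show ?thesis
    unfolding canonical_partner_def by (simp add: sorted_nth_mono)
qed

lemma serves_with_transf_step_iff:
  assumes "r \<in># base_step (fst st) r" "size (base_step (fst st) r) = size (snd st)"
  shows "serves_with snd (transf_step base_step) st r s \<longleftrightarrow>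
           closest_on_segment (snd st) r (canonical_partner (base_step (fst st) r) (snd st) r) s"
proof -
  define A where "A = snd st"
  define s0 where "s0 = matched_server (base_step (fst st) r) A r"
  have closest: "closest_on_segment A r (canonical_partner (base_step (fst st) r) A r) s0"
    using matched_server_closest[OF assms] unfolding s0_def A_def .
  then have "s0 \<in># A" by (simp add: closest_on_segment_def)
  have "serves_with snd (transf_step base_step) st r s \<longleftrightarrow> s = s0"
  proof
    assume "serves_with snd (transf_step base_step) st r s"
    then have "s \<in># A" "A - {#s0#} = A - {#s#}"
      by (simp_all add: serves_with_def transf_step_def s0_def A_def Let_def)
    then have "add_mset s0 (A - {#s0#}) = add_mset s (A - {#s0#})"
      using \<open>s0 \<in># A\<close> by (metis insert_DiffM)
    then show "s = s0" by simp
  qed (use \<open>s0 \<in># A\<close> in \<open>simp add: serves_with_def transf_step_def s0_def A_def Let_def\<close>)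
  with closest show ?thesis
    unfolding A_def using closest_on_segment_unique by blast
qed

lemma reachable_invariant:
  assumes "reachable step st0 st" "P st0" "\<And>st r. P st \<Longrightarrow> P (step st r)"
  shows "P st"
proof -
  obtain rs where "st = fold (\<lambda>r st. step st r) rs st0"
    using assms(1) unfolding reachable_def by blast
  with assms(2) show ?thesis
  proof (induction rs arbitrary: st0)
    case (Cons r rs)
    then show ?case using assms(3) by simp
  qed simp
qed

lemma reachable_transf_dc_step_sizes:
  assumes "C0 \<noteq> {#}" "reachable (transf_step dc_step) (C0, C0) st"
  shows "fst st \<noteq> {#} \<and> size (fst st) = size (snd st)"
proof -
  have "size (fst st) = size C0 \<and> size (snd st) = size C0"
    using assms(2)
  proof (rule reachable_invariant)
    fix st :: "real multiset \<times> real multiset" and r :: real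
    assume sizes: "size (fst st) = size C0 \<and> size (snd st) = size C0"
    then have "fst st \<noteq> {#}" using assms(1) by auto
    then have "size (dc_step (fst st) r) = size (snd st)" using sizes by (simp add: size_dc_step)
    then have "matched_server (dc_step (fst st) r) (snd st) r \<in># snd st"
      using matched_server_closest[OF dc_step_contains_request] by (simp add: closest_on_segment_def)
    then show "size (fst (transf_step dc_step st r)) = size C0 \<and>
               size (snd (transf_step dc_step st r)) = size C0"
      using sizes \<open>fst st \<noteq> {#}\<close> assms(1)
      by (auto simp: transf_step_def Let_def size_dc_step size_Diff_singleton nonempty_has_size)
  qed simp
  with assms(1) show ?thesis by auto
qed

lemma reachable_transf_dc_step_serves_with_iff:
  assumes "C0 \<noteq> {#}" "reachable (transf_step dc_step) (C0, C0) st"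
  shows "serves_with snd (transf_step dc_step) st r s \<longleftrightarrow>
           closest_on_segment (snd st) r (canonical_partner (dc_step (fst st) r) (snd st) r) s"
  using reachable_transf_dc_step_sizes[OF assms]
  by (simp add: serves_with_transf_step_iff dc_step_contains_request size_dc_step)

lemma reachable_transf_dc_step_closest_exists:
  assumes "C0 \<noteq> {#}" "reachable (transf_step dc_step) (C0, C0) st"
  shows "\<exists>s. closest_on_segment (snd st) r (canonical_partner (dc_step (fst st) r) (snd st) r) s"
  using reachable_transf_dc_step_sizes[OF assms]
    matched_server_closest[OF dc_step_contains_request, of "fst st" r "snd st"]
  by (auto simp: size_dc_step)

theorem lemma5:
  fixes C0 :: "real multiset"
  assumes "C0 \<noteq> {#}"
  shows "lazy_alg snd (transf_step dc_step) (C0, C0)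
       \<and> local_alg snd (transf_step dc_step) (C0, C0)
       \<and> monotone_alg snd (transf_step dc_step) (C0, C0)"
proof -
  let ?partner = "\<lambda>st r. canonical_partner (dc_step (fst st) r) (snd st) r"
  note serves_iff = reachable_transf_dc_step_serves_with_iff[OF assms]
  have partner_mono: "?partner st r \<le> ?partner st r'"
    if "reachable (transf_step dc_step) (C0, C0) st" "r \<le> r'" for st r r'
    using reachable_transf_dc_step_sizes[OF assms that(1)] canonical_partner_dc_step_mono that(2)
    by blast
  have "lazy_alg snd (transf_step dc_step) (C0, C0)"
    unfolding lazy_alg_def
    using serves_iff reachable_transf_dc_step_closest_exists[OF assms] by blast
  moreover have "local_alg snd (transf_step dc_step) (C0, C0)"
    unfolding local_alg_def using serves_iff closest_on_segment_adjacent by blast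
  moreover have "monotone_alg snd (transf_step dc_step) (C0, C0)"
    unfolding monotone_alg_def
    using serves_iff partner_mono by (blast intro: closest_on_segment_shift)
  ultimately show ?thesis by blast
qed

end
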